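(* For any $1\le y<x$ and any $v\ge \log n_{<y}$, one has (for every outcome of the random model) \[ \Delta(n_{<x})\ge \frac{\tau(n_{<y})}{2v+1}\cdot\Delta^{(v)}(n_{[y,x)}). \]
   Context: $\Delta(n)\coloneqq \max_{u\in\mathbb{R}}\#\{d\mid n: e^u<d\le e^{u+1}\}$, and for $v>0$, $\Delta^{(v)}(n)\coloneqq\max_{u\in\mathbb{R}}\#\{d\mid n: e^u<d\le e^{u+v}\}$; $\tau(n)$ is the number of divisors of $n$. Random model: for each prime $p$, $n_p$ equals $1$ with probability $\frac{p}{p+1}$ and $p$ with probability $\frac1{p+1}$, independently over $p$; $n_{<z}\coloneqq\prod_{p<z}n_p$ and $n_{[y,x)}\coloneqq\prod_{y\le p<x}n_p$, so $n_{<x}=n_{<y}n_{[y,x)}$. *)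

theory Defs
  imports "HOL-Computational_Algebra.Primes" Complex_Main
begin

definition divisor_count :: "nat \<Rightarrow> nat" where
  "divisor_count n = card {d. d dvd n}"

definition Delta_v :: "real \<Rightarrow> nat \<Rightarrow> nat" where
  "Delta_v v n = Sup ((\<lambda>u::real. card {d. d dvd n \<and> exp u < real d \<and> real d \<le> exp (u + v)}) ` UNIV)"

definition Delta :: "nat \<Rightarrow> nat" where
  "Delta n = Sup ((\<lambda>u::real. card {d. d dvd n \<and> exp u < real d \<and> real d \<le> exp (u + 1)}) ` UNIV)"

definition outcome :: "(nat \<Rightarrow> nat) \<Rightarrow> bool" where
  "outcome np \<longleftrightarrow> (\<forall>p. prime p \<longrightarrow> np p = 1 \<or> np p = p)"

definition n_lt :: "(nat \<Rightarrow> nat) \<Rightarrow> real \<Rightarrow> nat" where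
  "n_lt np z = (\<Prod>p\<in>{p. prime p \<and> real p < z}. np p)"

definition n_range :: "(nat \<Rightarrow> nat) \<Rightarrow> real \<Rightarrow> real \<Rightarrow> nat" where
  "n_range np y x = (\<Prod>p\<in>{p. prime p \<and> y \<le> real p \<and> real p < x}. np p)"

end

theory Submission
  imports Defs
begin

text \<open>Write m = n_{<y} and k = n_{[y,x)}, so that n_{<x} = m k with m and k coprime.
  If the window (e^u, e^{u+v}] contains Delta^(v)(k) divisors d of k, then the products a d
  with a | m are pairwise distinct divisors of m k lying in (e^u, m e^{u+v}], a window of length
  v + log m \<le> 2v. Covering it by \<lceil>v + log m\<rceil> \<le> 2v + 1 windows of length 1 gives
  tau(m) Delta^(v)(k) \<le> (2v + 1) Delta(m k).\<close>

definition divisor_window :: "nat \<Rightarrow> real \<Rightarrow> real \<Rightarrow> nat set" where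
  "divisor_window n u w = {d. d dvd n \<and> exp u < real d \<and> real d \<le> exp (u + w)}"

lemma Delta_v_eq: "Delta_v w n = Sup (range (\<lambda>u. card (divisor_window n u w)))"
  by (simp add: Delta_v_def divisor_window_def)

lemma Delta_eq_Delta_v_1: "Delta n = Delta_v 1 n"
  by (simp add: Delta_def Delta_v_def)

lemma divisor_window_subset: "divisor_window n u w \<subseteq> {d. d dvd n}"
  by (auto simp: divisor_window_def)

lemma finite_divisor_window: "n > 0 \<Longrightarrow> finite (divisor_window n u w)"
  by (rule finite_subset[OF divisor_window_subset]) simp

lemma finite_range_card_divisor_window:
  assumes "n > 0"
  shows "finite (range (\<lambda>u. card (divisor_window n u w)))"
proof (rule finite_subset)
  show "range (\<lambda>u. card (divisor_window n u w)) \<subseteq> {..card {d. d dvd n}}"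
    using assms by (auto intro!: card_mono divisor_window_subset)
qed simp

lemma card_divisor_window_le_Delta_v:
  "n > 0 \<Longrightarrow> card (divisor_window n u w) \<le> Delta_v w n"
  unfolding Delta_v_eq
  by (intro cSup_upper bdd_above_finite finite_range_card_divisor_window rangeI)

lemma Delta_v_attained:
  assumes "n > 0"
  obtains u where "Delta_v w n = card (divisor_window n u w)"
proof -
  let ?X = "range (\<lambda>u. card (divisor_window n u w))"
  have "Sup ?X \<in> ?X"
    using finite_range_card_divisor_window[OF assms]
    by (simp add: cSup_eq_Max)
  then show ?thesis using that unfolding Delta_v_eq by blast
qed

lemma mem_divisor_window_iff_ln:
  "d \<in> divisor_window n u w \<longleftrightarrow> d dvd n \<and> d > 0 \<and> u < ln (real d) \<and> ln (real d) \<le> u + w"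
proof (cases "d > 0")
  case True
  then have "exp u < real d \<longleftrightarrow> u < ln (real d)" "real d \<le> exp (u + w) \<longleftrightarrow> ln (real d) \<le> u + w"
    by (metis ln_exp ln_less_cancel_iff ln_le_cancel_iff exp_gt_zero of_nat_0_less_iff)+
  with True show ?thesis by (simp add: divisor_window_def)
qed (simp add: divisor_window_def)

lemma divisor_window_subset_unit_windows:
  "divisor_window n u w \<subseteq> (\<Union>j<nat \<lceil>w\<rceil>. divisor_window n (u + real j) 1)"
proof
  fix e assume e: "e \<in> divisor_window n u w"
  define i where "i = \<lceil>ln (real e) - u\<rceil> - 1"
  have "u < ln (real e)" "ln (real e) - u \<le> w"
    using e by (auto simp: mem_divisor_window_iff_ln)
  then have "0 \<le> i" "i < \<lceil>w\<rceil>"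
    unfolding i_def using ceiling_mono[of "ln (real e) - u" w] by linarith+
  moreover have "real_of_int i < ln (real e) - u" "ln (real e) - u \<le> real_of_int i + 1"
    unfolding i_def by linarith+
  ultimately have "nat i < nat \<lceil>w\<rceil>" "e \<in> divisor_window n (u + real (nat i)) 1"
    using e by (auto simp: mem_divisor_window_iff_ln)
  then show "e \<in> (\<Union>j<nat \<lceil>w\<rceil>. divisor_window n (u + real j) 1)" by blast
qed

lemma Delta_v_le_ceiling_mult_Delta:
  assumes "n > 0"
  shows "Delta_v w n \<le> nat \<lceil>w\<rceil> * Delta n"
proof -
  obtain u where u: "Delta_v w n = card (divisor_window n u w)"
    using Delta_v_attained[OF assms] .
  have "card (divisor_window n u w) \<le> card (\<Union>j<nat \<lceil>w\<rceil>. divisor_window n (u + real j) 1)"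
    using assms by (intro card_mono divisor_window_subset_unit_windows) (auto intro: finite_divisor_window)
  also have "\<dots> \<le> (\<Sum>j<nat \<lceil>w\<rceil>. card (divisor_window n (u + real j) 1))"
    by (rule card_UN_le) simp
  also have "\<dots> \<le> (\<Sum>j<nat \<lceil>w\<rceil>. Delta n)"
    unfolding Delta_eq_Delta_v_1
    using assms by (intro sum_mono card_divisor_window_le_Delta_v)
  finally show ?thesis using u by simp
qed

lemma gcd_mult_coprime_divisor_eq:
  fixes m k a d :: nat
  assumes "coprime m k" "a dvd m" "d dvd k"
  shows "gcd (a * d) m = a"
proof -
  have "coprime m d" using assms by (meson coprime_divisors dvd_refl)
  then show ?thesis using assms(2) by (simp add: gcd_mult_left_right_cancel gcd_nat.absorb1)
qed

lemma inj_on_mult_coprime_divisors: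
  fixes m k :: nat
  assumes "coprime m k" "m > 0"
  shows "inj_on (\<lambda>(a, d). a * d) ({a. a dvd m} \<times> {d. d dvd k})"
proof (rule inj_onI, clarsimp)
  fix a d a' d' :: nat
  assume "a dvd m" "d dvd k" "a' dvd m" "d' dvd k" and eq: "a * d = a' * d'"
  then have "a = a'" by (metis assms(1) gcd_mult_coprime_divisor_eq)
  moreover have "a > 0" using \<open>a dvd m\<close> assms(2) by (auto intro: dvd_pos_nat)
  ultimately show "a = a' \<and> d = d'" using eq by simp
qed

lemma divisor_count_mult_Delta_v_le:
  fixes m k :: nat
  assumes "coprime m k" "m > 0" "k > 0"
  shows "divisor_count m * Delta_v w k \<le> Delta_v (w + ln (real m)) (m * k)"
proof -
  obtain u where u: "Delta_v w k = card (divisor_window k u w)"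
    using Delta_v_attained[OF assms(3)] .
  let ?D = "{a. a dvd m} \<times> divisor_window k u w"
  have "(\<lambda>(a, d). a * d) ` ?D \<subseteq> divisor_window (m * k) u (w + ln (real m))"
  proof clarify
    fix a d assume a: "a dvd m" and d: "d \<in> divisor_window k u w"
    have "0 < a" "a \<le> m" using a assms(2) by (auto intro: dvd_pos_nat dvd_imp_le)
    moreover have "exp u < real d" "real d \<le> exp (u + w)"
      using d by (simp_all add: divisor_window_def)
    ultimately have "exp u < real a * real d" "real a * real d \<le> real m * exp (u + w)"
      using mult_right_mono[of 1 "real a" "real d"] by (auto intro: mult_mono)
    then show "a * d \<in> divisor_window (m * k) u (w + ln (real m))"
      using a d assms(2) by (auto simp: divisor_window_def exp_add mult_dvd_mono mult_ac)
  qed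
  moreover have "inj_on (\<lambda>(a, d). a * d) ?D"
    using inj_on_mult_coprime_divisors[OF assms(1,2)]
    by (rule inj_on_subset) (auto simp: divisor_window_def)
  ultimately have "card ?D \<le> card (divisor_window (m * k) u (w + ln (real m)))"
    using assms by (intro card_inj_on_le) (auto intro: finite_divisor_window)
  also have "\<dots> \<le> Delta_v (w + ln (real m)) (m * k)"
    using assms by (intro card_divisor_window_le_Delta_v) simp
  finally show ?thesis
    by (simp add: u divisor_count_def card_cartesian_product)
qed

lemma finite_primes_less: "finite {p::nat. prime p \<and> real p < z}"
  by (rule finite_subset[of _ "{..nat \<lceil>z\<rceil>}"]) (auto, linarith)

lemma outcome_pos:
  assumes "outcome np" "prime p"
  shows "np p > 0"
proof -
  have "np p = 1 \<or> np p = p" using assms unfolding outcome_def by blast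
  then show ?thesis using prime_gt_0_nat[OF assms(2)] by auto
qed

lemma n_lt_pos: "outcome np \<Longrightarrow> n_lt np z > 0"
  unfolding n_lt_def by (intro prod_pos) (auto intro: outcome_pos)

lemma n_range_pos: "outcome np \<Longrightarrow> n_range np y z > 0"
  unfolding n_range_def by (intro prod_pos) (auto intro: outcome_pos)

lemma n_lt_eq_mult_n_range:
  assumes "y \<le> x"
  shows "n_lt np x = n_lt np y * n_range np y x"
proof -
  have split: "{p. prime p \<and> real p < x} =
      {p. prime p \<and> real p < y} \<union> {p. prime p \<and> y \<le> real p \<and> real p < x}"
    using assms by auto
  have "finite {p. prime p \<and> y \<le> real p \<and> real p < x}"
    by (rule finite_subset[OF _ finite_primes_less[of x]]) auto
  then show ?thesis
    unfolding n_lt_def n_range_def split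
    by (intro prod.union_disjoint) (auto simp: finite_primes_less)
qed

lemma coprime_n_lt_n_range:
  assumes "outcome np"
  shows "coprime (n_lt np y) (n_range np y x)"
  unfolding n_lt_def n_range_def
proof (intro prod_coprime_left prod_coprime_right)
  fix p q
  assume p: "p \<in> {p. prime p \<and> real p < y}" and q: "q \<in> {p. prime p \<and> y \<le> real p \<and> real p < x}"
  then have "coprime p q" by (auto simp: primes_coprime)
  moreover have "np p \<in> {1, p}" "np q \<in> {1, q}"
    using assms p q unfolding outcome_def by auto
  ultimately show "coprime (np p) (np q)" by auto
qed

theorem lemma3p1:
  fixes np :: "nat \<Rightarrow> nat" and x y v :: real
  assumes "outcome np" and "1 \<le> y" and "y < x" and "v \<ge> ln (real (n_lt np y))"
  shows "real (Delta (n_lt np x)) \<ge>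
           real (divisor_count (n_lt np y)) / (2 * v + 1) * real (Delta_v v (n_range np y x))"
proof -
  define m where "m = n_lt np y"
  define k where "k = n_range np y x"
  have m: "m > 0" and k: "k > 0" and n: "n_lt np x = m * k"
    using assms(1,3) by (simp_all add: m_def k_def n_lt_pos n_range_pos n_lt_eq_mult_n_range)
  have "0 \<le> ln (real m)" "ln (real m) \<le> v"
    using m assms(4) by (simp_all add: m_def)
  then have ceiling_le: "real (nat \<lceil>v + ln (real m)\<rceil>) \<le> 2 * v + 1"
    by linarith
  have "divisor_count m * Delta_v v k \<le> Delta_v (v + ln (real m)) (m * k)"
    using coprime_n_lt_n_range[OF assms(1)] m k
    by (intro divisor_count_mult_Delta_v_le) (simp_all add: m_def k_def)
  also have "\<dots> \<le> nat \<lceil>v + ln (real m)\<rceil> * Delta (m * k)"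
    using m k by (intro Delta_v_le_ceiling_mult_Delta) simp
  finally have "real (divisor_count m) * real (Delta_v v k) \<le>
      real (nat \<lceil>v + ln (real m)\<rceil>) * real (Delta (m * k))"
    by (simp only: of_nat_le_iff flip: of_nat_mult)
  also have "\<dots> \<le> (2 * v + 1) * real (Delta (m * k))"
    using ceiling_le by (rule mult_right_mono) simp
  finally have "real (divisor_count m) * real (Delta_v v k) / (2 * v + 1) \<le> real (Delta (m * k))"
    using \<open>0 \<le> ln (real m)\<close> \<open>ln (real m) \<le> v\<close> by (simp add: pos_divide_le_eq mult.commute)
  then show ?thesis
    by (simp add: m_def k_def n)
qed

end
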